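(* Let $\mathcal{T}=(V,A,E,f,q,v_0)$ be a decorated rooted tree and let $v,w\in V$ be such that $v<w$ or $w<v$. If $\mathcal{T}$ has negative determinants then $\det(\gamma_{v,w})<0$; if $\mathcal{T}$ has positive determinants then $\det(\gamma_{v,w})>0$.
   Context: A graph is a pair $(X_0,X_1)$ of finite sets such that each element of $X_1$ (an edge) is a $2$-element subset of $X_0$; elements of $X_0$ are cells. A path is a tuple $(x_0,\dots,x_n)$ ($n\ge0$) of cells with $\{x_i,x_{i+1}\}$ an edge for each $i<n$, these edges pairwise distinct; a cell/edge is in the path if it is some $x_i$ / some $\{x_i,x_{i+1}\}$. The graph is a tree if any two cells $x,y$ are joined by a unique path $\gamma_{x,y}$. A decorated tree is $(V,A,E,f,q)$ with $V$ (vertices), $A$ (arrows) finite disjoint sets, $(V\cup A,E)$ a tree, every arrow contained in exactly one edge, $f:A\to\mathbb{Z}$, $q(e,x)\in\mathbb{Z}$ for each $e\in E$, $x\in e$, with $q(e,\alpha)=1$ for $\alpha\in A$, and for each $v\in V$ and distinct edges $e,e'\ni v$, $\gcd(q(e,v),q(e',v))=1$. For $x\in V\cup A$, $e\ni x$: $Q(e,x)=\prod q(e',x)$ over edges $e'\ne e$ containing $x$ (empty product $=1$); for an edge $e=\{x,y\}$, $\det(e)=q(e,x)q(e,y)-Q(e,x)Q(e,y)$. For a path $\gamma=(x_0,\dots,x_n)$ with $n>0$: $q(\gamma,x_0)=q(\{x_0,x_1\},x_0)$, $q(\gamma,x_n)=q(\{x_{n-1},x_n\},x_n)$; for a cell $u$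 of $\gamma$, $Q(\gamma,u)=\prod q(\varepsilon,u)$ over edges $\varepsilon\ni u$ not in $\gamma$; $Q^*(\gamma)=\prod_{0<i<n}Q(\gamma,x_i)$; and $\det(\gamma)=q(\gamma,x_0)q(\gamma,x_n)-Q^*(\gamma)^2Q(\gamma,x_0)Q(\gamma,x_n)$. A root of $(V,A,E,f,q)$ is a vertex $v_0$ with $q(e,v_0)=1$ for every edge $e\ni v_0$ such that for every $v\in V\setminus\{v_0\}$, all edges $e\ni v$ not in $\gamma_{v_0,v}$ satisfy $q(e,v)\ge1$ and at most one of them satisfies $q(e,v)\ne1$. A decorated rooted tree is $(V,A,E,f,q,v_0)$ with $v_0$ a root. For distinct $x,y\in V\cup A$, $x<y$ means $x$ is in $\gamma_{v_0,y}$. $\mathcal{T}$ has negative (resp. positive) determinants if $\det(e)<0$ (resp. $>0$) for every edge $e=\{x,y\}$ with $x,y\in V$. *)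

theory Defs
  imports Main
begin

definition graph :: "'a set \<Rightarrow> 'a set set \<Rightarrow> bool" where
  "graph X0 X1 \<longleftrightarrow> finite X0 \<and> finite X1 \<and> (\<forall>e\<in>X1. e \<subseteq> X0 \<and> card e = 2)"

definition path_edge :: "'a list \<Rightarrow> nat \<Rightarrow> 'a set" where
  "path_edge xs i = {xs ! i, xs ! Suc i}"

definition path_edges :: "'a list \<Rightarrow> 'a set set" where
  "path_edges xs = {path_edge xs i | i. Suc i < length xs}"

definition is_path :: "'a set \<Rightarrow> 'a set set \<Rightarrow> 'a list \<Rightarrow> bool" where
  "is_path X0 X1 xs \<longleftrightarrow> xs \<noteq> [] \<and> set xs \<subseteq> X0 \<and>
     (\<forall>i. Suc i < length xs \<longrightarrow> path_edge xs i \<in> X1) \<and>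
     (\<forall>i j. Suc i < length xs \<longrightarrow> Suc j < length xs \<longrightarrow> i \<noteq> j \<longrightarrow> path_edge xs i \<noteq> path_edge xs j)"

definition is_tree :: "'a set \<Rightarrow> 'a set set \<Rightarrow> bool" where
  "is_tree X0 X1 \<longleftrightarrow> graph X0 X1 \<and>
     (\<forall>x\<in>X0. \<forall>y\<in>X0. \<exists>!p. is_path X0 X1 p \<and> hd p = x \<and> last p = y)"

definition gpath :: "'a set \<Rightarrow> 'a set set \<Rightarrow> 'a \<Rightarrow> 'a \<Rightarrow> 'a list" where
  "gpath X0 X1 x y = (THE p. is_path X0 X1 p \<and> hd p = x \<and> last p = y)"

definition decorated_tree ::
  "'a set \<Rightarrow> 'a set \<Rightarrow> 'a set set \<Rightarrow> ('a \<Rightarrow> int) \<Rightarrow> ('a set \<Rightarrow> 'a \<Rightarrow> int) \<Rightarrow> bool" where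
  "decorated_tree V A E f q \<longleftrightarrow> finite V \<and> finite A \<and> V \<inter> A = {} \<and> is_tree (V \<union> A) E \<and>
     (\<forall>\<alpha>\<in>A. card {e\<in>E. \<alpha> \<in> e} = 1) \<and>
     (\<forall>e\<in>E. \<forall>\<alpha>\<in>A. \<alpha> \<in> e \<longrightarrow> q e \<alpha> = 1) \<and>
     (\<forall>v\<in>V. \<forall>e\<in>E. \<forall>e'\<in>E. v \<in> e \<longrightarrow> v \<in> e' \<longrightarrow> e \<noteq> e' \<longrightarrow> gcd (q e v) (q e' v) = 1)"

definition Qe :: "'a set set \<Rightarrow> ('a set \<Rightarrow> 'a \<Rightarrow> int) \<Rightarrow> 'a set \<Rightarrow> 'a \<Rightarrow> int" where
  "Qe E q e x = (\<Prod>e'\<in>{e'\<in>E. x \<in> e' \<and> e' \<noteq> e}. q e' x)"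

definition det_edge :: "'a set set \<Rightarrow> ('a set \<Rightarrow> 'a \<Rightarrow> int) \<Rightarrow> 'a \<Rightarrow> 'a \<Rightarrow> int" where
  "det_edge E q x y = q {x,y} x * q {x,y} y - Qe E q {x,y} x * Qe E q {x,y} y"

definition Qpath :: "'a set set \<Rightarrow> ('a set \<Rightarrow> 'a \<Rightarrow> int) \<Rightarrow> 'a list \<Rightarrow> 'a \<Rightarrow> int" where
  "Qpath E q xs u = (\<Prod>\<epsilon>\<in>{\<epsilon>\<in>E. u \<in> \<epsilon> \<and> \<epsilon> \<notin> path_edges xs}. q \<epsilon> u)"

definition Qstar :: "'a set set \<Rightarrow> ('a set \<Rightarrow> 'a \<Rightarrow> int) \<Rightarrow> 'a list \<Rightarrow> int" where
  "Qstar E q xs = (\<Prod>i\<in>{0<..<length xs - 1}. Qpath E q xs (xs ! i))"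

definition det_path :: "'a set set \<Rightarrow> ('a set \<Rightarrow> 'a \<Rightarrow> int) \<Rightarrow> 'a list \<Rightarrow> int" where
  "det_path E q xs =
     (let n = length xs - 1 in
      q (path_edge xs 0) (xs ! 0) * q (path_edge xs (n - 1)) (xs ! n)
      - (Qstar E q xs)^2 * Qpath E q xs (xs ! 0) * Qpath E q xs (xs ! n))"

definition is_root ::
  "'a set \<Rightarrow> 'a set \<Rightarrow> 'a set set \<Rightarrow> ('a \<Rightarrow> int) \<Rightarrow> ('a set \<Rightarrow> 'a \<Rightarrow> int) \<Rightarrow> 'a \<Rightarrow> bool" where
  "is_root V A E f q v0 \<longleftrightarrow> v0 \<in> V \<and> (\<forall>e\<in>E. v0 \<in> e \<longrightarrow> q e v0 = 1) \<and>
     (\<forall>v\<in>V - {v0}.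
        (\<forall>e\<in>E. v \<in> e \<longrightarrow> e \<notin> path_edges (gpath (V \<union> A) E v0 v) \<longrightarrow> q e v \<ge> 1) \<and>
        card {e\<in>E. v \<in> e \<and> e \<notin> path_edges (gpath (V \<union> A) E v0 v) \<and> q e v \<noteq> 1} \<le> 1)"

definition decorated_rooted_tree ::
  "'a set \<Rightarrow> 'a set \<Rightarrow> 'a set set \<Rightarrow> ('a \<Rightarrow> int) \<Rightarrow> ('a set \<Rightarrow> 'a \<Rightarrow> int) \<Rightarrow> 'a \<Rightarrow> bool" where
  "decorated_rooted_tree V A E f q v0 \<longleftrightarrow> decorated_tree V A E f q \<and> is_root V A E f q v0"

definition tree_less :: "'a set \<Rightarrow> 'a set \<Rightarrow> 'a set set \<Rightarrow> 'a \<Rightarrow> 'a \<Rightarrow> 'a \<Rightarrow> bool" where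
  "tree_less V A E v0 x y \<longleftrightarrow> x \<noteq> y \<and> x \<in> set (gpath (V \<union> A) E v0 y)"

definition negative_determinants :: "'a set \<Rightarrow> 'a set set \<Rightarrow> ('a set \<Rightarrow> 'a \<Rightarrow> int) \<Rightarrow> bool" where
  "negative_determinants V E q \<longleftrightarrow> (\<forall>x\<in>V. \<forall>y\<in>V. {x,y} \<in> E \<longrightarrow> det_edge E q x y < 0)"

definition positive_determinants :: "'a set \<Rightarrow> 'a set set \<Rightarrow> ('a set \<Rightarrow> 'a \<Rightarrow> int) \<Rightarrow> bool" where
  "positive_determinants V E q \<longleftrightarrow> (\<forall>x\<in>V. \<forall>y\<in>V. {x,y} \<in> E \<longrightarrow> det_edge E q x y > 0)"

end

theory Submission
  imports Defs
begin

(* Write gamma = (x_0, ..., x_n) with edges e_j = {x_j, x_(j+1)}, and put c_j = q(e_j, x_j),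
   b_j = q(e_j, x_(j+1)), P_i = Q(gamma, x_i).  Then det(e_j) = c_j b_j - L_j R_j with
   L_j = b_(j-1) P_j (L_0 = P_0) and R_j = c_(j+1) P_(j+1) (R_(n-1) = P_n), while
   det(gamma) = c_0 b_(n-1) - (P_1 ... P_(n-1))^2 P_0 P_n.  The quantities
   D_m = c_0 b_m - (P_1 ... P_m)^2 P_0 R_m (the determinant of the segment (x_0, ..., x_(m+1)))
   satisfy c_(m+1) D_(m+1) = c_0 det(e_(m+1)) + P_(m+1) R_(m+1) D_m, so D_m inherits the common
   sign of the edge determinants as long as the c_j, P_i (i > 0) and R_j are positive.
   If v < w, then gamma_(v,w) is a final segment of gamma_(v0,w): its interior cells are
   vertices, because arrows lie on a single edge, and at each x_i the edges off gamma are
   off gamma_(v0,x_i), so the root condition gives the positivity.  The case w < v follows by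
   reversing the path, which does not change its determinant. *)

lemma is_path_reindex:
  assumes "is_path X0 X1 p" and "ys \<noteq> []" and "set ys \<subseteq> set p"
    and "\<And>i. Suc i < length ys \<Longrightarrow> Suc (h i) < length p \<and> path_edge ys i = path_edge p (h i)"
    and "inj_on h {i. Suc i < length ys}"
  shows "is_path X0 X1 ys"
  using assms unfolding is_path_def inj_on_def by (metis (mono_tags) mem_Collect_eq subset_trans)

lemma path_edge_take: "i < j \<Longrightarrow> j < length p \<Longrightarrow> path_edge (take (Suc j) p) i = path_edge p i"
  by (simp add: path_edge_def)

lemma path_edge_drop: "Suc (k + i) < length p \<Longrightarrow> path_edge (drop k p) i = path_edge p (k + i)"
  by (simp add: path_edge_def)

lemma path_edge_rev: "Suc i < length p \<Longrightarrow> path_edge (rev p) i = path_edge p (length p - 2 - i)"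
  by (simp add: path_edge_def rev_nth Suc_diff_Suc numeral_2_eq_2 insert_commute)

lemma is_path_take:
  assumes "is_path X0 X1 p" "j < length p"
  shows "is_path X0 X1 (take (Suc j) p)"
  by (rule is_path_reindex[OF assms(1), where h=id])
     (use assms in \<open>auto simp: path_edge_take is_path_def dest: in_set_takeD\<close>)

lemma is_path_drop:
  assumes "is_path X0 X1 p" "k < length p"
  shows "is_path X0 X1 (drop k p)"
  by (rule is_path_reindex[OF assms(1), where h="(+) k"])
     (use assms in \<open>auto simp: path_edge_drop dest: in_set_dropD\<close>)

lemma is_path_rev:
  assumes "is_path X0 X1 p"
  shows "is_path X0 X1 (rev p)"
  by (rule is_path_reindex[OF assms, where h="\<lambda>i. length p - 2 - i"])
     (use assms in \<open>auto simp: path_edge_rev is_path_def inj_on_def\<close>)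

lemma path_edges_rev: "path_edges (rev p) = path_edges p"
proof -
  have "path_edges (rev p) \<subseteq> path_edges p" for p :: "'b list"
    unfolding path_edges_def by (force simp: path_edge_rev)
  from this[of p] this[of "rev p"] show ?thesis by simp
qed

lemma gpath_spec:
  assumes "is_tree X0 X1" "x \<in> X0" "y \<in> X0"
  shows "is_path X0 X1 (gpath X0 X1 x y) \<and> hd (gpath X0 X1 x y) = x \<and> last (gpath X0 X1 x y) = y"
  unfolding gpath_def by (rule theI') (use assms in \<open>auto simp: is_tree_def\<close>)

lemma gpath_eq:
  assumes "is_tree X0 X1" "is_path X0 X1 p"
  shows "gpath X0 X1 (hd p) (last p) = p"
proof -
  have "hd p \<in> X0" "last p \<in> X0" using assms(2) unfolding is_path_def by auto
  then have "\<exists>!p'. is_path X0 X1 p' \<and> hd p' = hd p \<and> last p' = last p"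
    using assms(1) unfolding is_tree_def by blast
  then show ?thesis
    unfolding gpath_def using assms(2) by (simp add: the1_equality)
qed

lemma distinct_tree_path:
  assumes T: "is_tree X0 X1" and p: "is_path X0 X1 p"
  shows "distinct p"
proof (rule ccontr)
  assume "\<not> distinct p"
  then obtain i j where ij: "i < j" "j < length p" "p ! i = p ! j"
    by (metis distinct_conv_nth linorder_neqE_nat)
  define loop where "loop = take (Suc (j - i)) (drop i p)"
  have "is_path X0 X1 loop"
    unfolding loop_def using ij by (intro is_path_take is_path_drop p) auto
  moreover have "hd loop = p ! i" "last loop = p ! i" "length loop = Suc (j - i)"
    using ij by (auto simp: loop_def hd_conv_nth last_conv_nth)
  moreover have "is_path X0 X1 [p ! i]"
    using p ij unfolding is_path_def by auto
  ultimately show False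
    using gpath_eq[OF T, of loop] gpath_eq[OF T, of "[p ! i]"] ij by auto
qed

lemma path_edges_at_nth:
  assumes "distinct xs" "i < length xs"
  shows "{e \<in> path_edges xs. xs ! i \<in> e} =
    (if 0 < i then {path_edge xs (i - 1)} else {}) \<union> (if Suc i < length xs then {path_edge xs i} else {})"
proof -
  have "xs ! i \<in> path_edge xs j \<longleftrightarrow> j = i \<or> Suc j = i" if "Suc j < length xs" for j
    using that assms nth_eq_iff_index_eq by (fastforce simp: path_edge_def)
  then have "{e \<in> path_edges xs. xs ! i \<in> e} = path_edge xs ` {j. Suc j < length xs \<and> (j = i \<or> Suc j = i)}"
    unfolding path_edges_def by auto
  also have "{j. Suc j < length xs \<and> (j = i \<or> Suc j = i)} =
      (if 0 < i then {i - 1} else {}) \<union> (if Suc i < length xs then {i} else {})"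
    using assms(2) by auto
  finally show ?thesis by (auto split: if_splits)
qed

lemma Qe_eq_prod_path_edges_mult_Qpath:
  assumes "finite E" "path_edges xs \<subseteq> E" "e \<in> path_edges xs"
  shows "Qe E q e u = (\<Prod>e'\<in>{e' \<in> path_edges xs. u \<in> e'} - {e}. q e' u) * Qpath E q xs u"
proof -
  have "{e' \<in> E. u \<in> e' \<and> e' \<noteq> e} =
      ({e' \<in> path_edges xs. u \<in> e'} - {e}) \<union> {\<epsilon> \<in> E. u \<in> \<epsilon> \<and> \<epsilon> \<notin> path_edges xs}"
    using assms(2,3) by auto
  then have "Qe E q e u = (\<Prod>e'\<in>({e' \<in> path_edges xs. u \<in> e'} - {e}) \<union>
      {\<epsilon> \<in> E. u \<in> \<epsilon> \<and> \<epsilon> \<notin> path_edges xs}. q e' u)"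
    unfolding Qe_def by simp
  also have "\<dots> = (\<Prod>e'\<in>{e' \<in> path_edges xs. u \<in> e'} - {e}. q e' u) * Qpath E q xs u"
    unfolding Qpath_def using assms(1) finite_subset[OF assms(2,1)]
    by (intro prod.union_disjoint) auto
  finally show ?thesis .
qed

lemma path_edges_subset: "is_path X0 X1 xs \<Longrightarrow> path_edges xs \<subseteq> X1"
  unfolding is_path_def path_edges_def by auto

lemma path_edge_in_path_edges: "Suc i < length xs \<Longrightarrow> path_edge xs i \<in> path_edges xs"
  unfolding path_edges_def by auto

lemma path_edge_neq_next:
  "is_path X0 X1 xs \<Longrightarrow> Suc (Suc j) < length xs \<Longrightarrow> path_edge xs j \<noteq> path_edge xs (Suc j)"
  unfolding is_path_def by auto

lemma Qe_path_edge_left: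
  assumes "is_path X0 E xs" "distinct xs" "finite E" "Suc j < length xs"
  shows "Qe E q (path_edge xs j) (xs ! j) =
    (if j = 0 then 1 else q (path_edge xs (j - 1)) (xs ! j)) * Qpath E q xs (xs ! j)"
proof -
  have "{e \<in> path_edges xs. xs ! j \<in> e} - {path_edge xs j} = (if j = 0 then {} else {path_edge xs (j - 1)})"
  proof (cases j)
    case (Suc i)
    then show ?thesis
      using path_edges_at_nth[OF assms(2) Suc_lessD[OF assms(4)]] path_edge_neq_next[OF assms(1), of i]
        assms(4)
      by auto
  qed (use path_edges_at_nth[OF assms(2) Suc_lessD[OF assms(4)]] assms(4) in auto)
  then show ?thesis
    using Qe_eq_prod_path_edges_mult_Qpath[OF assms(3) path_edges_subset[OF assms(1)]
        path_edge_in_path_edges[OF assms(4)]]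
    by simp
qed

lemma Qe_path_edge_right:
  assumes "is_path X0 E xs" "distinct xs" "finite E" "Suc j < length xs"
  shows "Qe E q (path_edge xs j) (xs ! Suc j) =
    (if Suc (Suc j) < length xs then q (path_edge xs (Suc j)) (xs ! Suc j) else 1) * Qpath E q xs (xs ! Suc j)"
proof -
  have "{e \<in> path_edges xs. xs ! Suc j \<in> e} - {path_edge xs j} =
      (if Suc (Suc j) < length xs then {path_edge xs (Suc j)} else {})"
    using path_edges_at_nth[OF assms(2) assms(4)] path_edge_neq_next[OF assms(1), of j] assms(4)
    by (simp add: insert_Diff_if)
  then show ?thesis
    using Qe_eq_prod_path_edges_mult_Qpath[OF assms(3) path_edges_subset[OF assms(1)]
        path_edge_in_path_edges[OF assms(4)]]
    by simp
qed

lemma sgn_det_chain: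
  fixes c b P L R :: "nat \<Rightarrow> 'a::linordered_idom"
  assumes c_pos: "\<And>j. j < n \<Longrightarrow> c j > 0" and P_pos: "\<And>i. 0 < i \<Longrightarrow> i < n \<Longrightarrow> P i > 0"
    and R_pos: "\<And>j. j < n \<Longrightarrow> R j > 0"
    and L0: "L 0 = P 0" and LSuc: "\<And>j. Suc j < n \<Longrightarrow> L (Suc j) = b j * P (Suc j)"
    and RSuc: "\<And>j. Suc j < n \<Longrightarrow> R j = c (Suc j) * P (Suc j)"
    and edge: "\<And>j. j < n \<Longrightarrow> sgn (c j * b j - L j * R j) = s"
  shows "m < n \<Longrightarrow> sgn (c 0 * b m - (\<Prod>i\<in>{0<..m}. P i)^2 * P 0 * R m) = s"
proof (induction m)
  case 0
  then show ?case using edge[of 0] L0 by simp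
next
  case (Suc m)
  define T where "T = (\<Prod>i\<in>{0<..m}. P i)^2 * P 0"
  have "{0<..Suc m} = insert (Suc m) {0<..m}" by auto
  then have T_Suc: "(\<Prod>i\<in>{0<..Suc m}. P i)^2 * P 0 = T * P (Suc m)^2"
    by (simp add: T_def power_mult_distrib)
  have "c (Suc m) * (c 0 * b (Suc m) - T * P (Suc m)^2 * R (Suc m)) =
      c 0 * (c (Suc m) * b (Suc m) - L (Suc m) * R (Suc m)) +
      P (Suc m) * R (Suc m) * (c 0 * b m - T * R m)"
    using LSuc[of m] RSuc[of m] Suc.prems by (simp add: algebra_simps power2_eq_square)
  moreover have "sgn (c 0 * (c (Suc m) * b (Suc m) - L (Suc m) * R (Suc m))) = s"
    using c_pos[of 0] edge[of "Suc m"] Suc.prems by (simp add: sgn_mult)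
  moreover have "sgn (P (Suc m) * R (Suc m) * (c 0 * b m - T * R m)) = s"
    using P_pos[of "Suc m"] R_pos[of "Suc m"] Suc by (simp add: sgn_mult T_def)
  ultimately have "sgn (c (Suc m) * (c 0 * b (Suc m) - T * P (Suc m)^2 * R (Suc m))) = s"
    by (metis same_sgn_sgn_add)
  then show ?case
    using c_pos[of "Suc m"] Suc.prems by (simp add: sgn_mult T_Suc)
qed

lemma sgn_det_path:
  assumes path: "is_path X0 E xs" and dist: "distinct xs" and fin: "finite E"
    and len: "length xs = Suc n" and "0 < n"
    and first_pos: "\<And>j. j < n \<Longrightarrow> q (path_edge xs j) (xs ! j) > 0"
    and Qpath_pos: "\<And>i. 0 < i \<Longrightarrow> i \<le> n \<Longrightarrow> Qpath E q xs (xs ! i) > 0"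
    and edge: "\<And>j. j < n \<Longrightarrow> sgn (det_edge E q (xs ! j) (xs ! Suc j)) = s"
  shows "sgn (det_path E q xs) = s"
proof -
  define c where "c j = q (path_edge xs j) (xs ! j)" for j
  define b where "b j = q (path_edge xs j) (xs ! Suc j)" for j
  define P where "P i = Qpath E q xs (xs ! i)" for i
  define L where "L j = Qe E q (path_edge xs j) (xs ! j)" for j
  define R where "R j = Qe E q (path_edge xs j) (xs ! Suc j)" for j
  have L_eq: "L j = (if j = 0 then 1 else b (j - 1)) * P j" if "j < n" for j
    using Qe_path_edge_left[OF path dist fin, of j] that len
    by (cases j) (simp_all add: L_def b_def P_def)
  have R_eq: "R j = (if Suc j < n then c (Suc j) else 1) * P (Suc j)" if "j < n" for j
    using Qe_path_edge_right[OF path dist fin, of j] that len by (simp add: R_def c_def P_def)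
  have "sgn (c 0 * b (n - 1) - (\<Prod>i\<in>{0<..n - 1}. P i)^2 * P 0 * R (n - 1)) = s"
  proof (rule sgn_det_chain)
    show "c j > 0" if "j < n" for j using first_pos[OF that] by (simp add: c_def)
    show "P i > 0" if "0 < i" "i < n" for i using Qpath_pos that by (simp add: P_def)
    show "R j > 0" if "j < n" for j
      using R_eq[OF that] first_pos[of "Suc j"] Qpath_pos[of "Suc j"] that by (simp add: c_def P_def)
    show "sgn (c j * b j - L j * R j) = s" if "j < n" for j
      using edge[OF that] by (simp add: det_edge_def path_edge_def c_def b_def L_def R_def)
  qed (use L_eq R_eq \<open>0 < n\<close> in auto)
  moreover have "det_path E q xs = c 0 * b (n - 1) - (\<Prod>i\<in>{0<..n - 1}. P i)^2 * P 0 * R (n - 1)"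
  proof -
    have "{0<..n - 1} = {0<..<n}" using \<open>0 < n\<close> by auto
    then show ?thesis
      using R_eq[of "n - 1"] \<open>0 < n\<close> len
      by (simp add: det_path_def Qstar_def c_def b_def P_def)
  qed
  ultimately show ?thesis by simp
qed

lemma interior_cell_not_arrow:
  assumes "decorated_tree V A E f q" "is_path (V \<union> A) E xs" "0 < i" "Suc i < length xs"
  shows "xs ! i \<notin> A"
proof
  assume "xs ! i \<in> A"
  then have "card {e \<in> E. xs ! i \<in> e} = 1"
    using assms(1) unfolding decorated_tree_def by auto
  moreover have "path_edge xs (i - 1) \<in> {e \<in> E. xs ! i \<in> e}" "path_edge xs i \<in> {e \<in> E. xs ! i \<in> e}"
    using path_edges_subset[OF assms(2)] path_edge_in_path_edges[of "i - 1" xs]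
      path_edge_in_path_edges[of i xs] assms(3,4)
    by (auto simp: path_edge_def)
  moreover have "path_edge xs (i - 1) \<noteq> path_edge xs i"
    using path_edge_neq_next[OF assms(2), of "i - 1"] assms(3,4) by simp
  ultimately show False by (metis card_1_singletonE singletonD)
qed

lemma det_path_rev:
  assumes "2 \<le> length xs"
  shows "det_path E q (rev xs) = det_path E q xs"
proof -
  define n where "n = length xs - 1"
  have len: "length xs = Suc n" and "0 < n" using assms by (auto simp: n_def)
  have rev_nth_eq: "rev xs ! i = xs ! (n - i)" if "i \<le> n" for i
    using that len by (simp add: rev_nth)
  have Qpath_rev: "Qpath E q (rev xs) = Qpath E q xs"
    unfolding Qpath_def path_edges_rev ..
  have "Qstar E q (rev xs) = Qstar E q xs"
    unfolding Qstar_def Qpath_rev length_rev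
    by (rule prod.reindex_bij_witness[of _ "\<lambda>i. n - i" "\<lambda>i. n - i"]) (auto simp: len rev_nth_eq)
  moreover have "path_edge (rev xs) 0 = path_edge xs (n - 1)" "path_edge (rev xs) (n - 1) = path_edge xs 0"
    using path_edge_rev[of 0 xs] path_edge_rev[of "n - 1" xs] len \<open>0 < n\<close> by auto
  ultimately show ?thesis
    unfolding det_path_def Let_def length_rev Qpath_rev
    using rev_nth_eq[of 0] rev_nth_eq[of n] len by (simp add: n_def[symmetric] mult_ac)
qed

lemma sgn_det_gpath_descending:
  assumes drt: "decorated_rooted_tree V A E f q v0" and "v \<in> V" "w \<in> V"
    and "tree_less V A E v0 v w"
    and edge: "\<And>x y. x \<in> V \<Longrightarrow> y \<in> V \<Longrightarrow> {x, y} \<in> E \<Longrightarrow> sgn (det_edge E q x y) = s"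
  shows "sgn (det_path E q (gpath (V \<union> A) E v w)) = s"
proof -
  have dt: "decorated_tree V A E f q" and root: "is_root V A E f q v0"
    using drt unfolding decorated_rooted_tree_def by auto
  have tree: "is_tree (V \<union> A) E" and fin: "finite E"
    using dt unfolding decorated_tree_def is_tree_def graph_def by auto
  have "v0 \<in> V" using root unfolding is_root_def by simp
  define r where "r = gpath (V \<union> A) E v0 w"
  have r: "is_path (V \<union> A) E r" "hd r = v0" "last r = w"
    using gpath_spec[OF tree] \<open>v0 \<in> V\<close> \<open>w \<in> V\<close> unfolding r_def by auto
  have "r \<noteq> []" using r(1) unfolding is_path_def by simp
  have dist: "distinct r" using distinct_tree_path[OF tree r(1)] .
  obtain k where k: "k < length r" "r ! k = v"
    using \<open>tree_less V A E v0 v w\<close> unfolding tree_less_def r_def by (auto simp: in_set_conv_nth)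
  have "Suc k < length r"
    using k r(3) \<open>r \<noteq> []\<close> \<open>tree_less V A E v0 v w\<close>
    by (metis Suc_lessI diff_Suc_1 last_conv_nth tree_less_def)
  define xs where "xs = drop k r"
  define n where "n = length r - Suc k"
  have len: "length xs = Suc n" and "0 < n"
    using \<open>Suc k < length r\<close> unfolding xs_def n_def by auto
  have xs_nth: "xs ! i = r ! (k + i)" for i
    using k(1) unfolding xs_def by simp
  have xs_edge: "path_edge xs i = path_edge r (k + i)" for i
    unfolding path_edge_def xs_nth by simp
  have xs: "is_path (V \<union> A) E xs" unfolding xs_def using r(1) k(1) by (rule is_path_drop)
  have "gpath (V \<union> A) E v w = xs"
    using gpath_eq[OF tree xs] k r(3) \<open>r \<noteq> []\<close> by (simp add: xs_def hd_drop_conv_nth)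
  have in_V: "r ! m \<in> V" if m: "k \<le> m" "m < length r" for m
  proof -
    consider "m = k" | "m = length r - 1" | "0 < m" "Suc m < length r" using m by linarith
    then show ?thesis
    proof cases
      case 3
      then have "r ! m \<notin> A" by (rule interior_cell_not_arrow[OF dt r(1)])
      moreover have "r ! m \<in> V \<union> A" using r(1) m(2) unfolding is_path_def by (auto dest: nth_mem)
      ultimately show ?thesis by simp
    qed (use k r(3) \<open>v \<in> V\<close> \<open>w \<in> V\<close> \<open>r \<noteq> []\<close> in \<open>auto simp: last_conv_nth\<close>)
  qed
  have root_pos: "q e (r ! m) \<ge> 1"
    if m: "k \<le> m" "m < length r" and e: "e \<in> E" "r ! m \<in> e"
      and not_back: "0 < m \<Longrightarrow> e \<noteq> path_edge r (m - 1)" for m e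
  proof (cases "r ! m = v0")
    case True
    then show ?thesis using root e unfolding is_root_def by simp
  next
    case False
    have "hd (take (Suc m) r) = v0" using r(2) by (cases r) auto
    moreover have "last (take (Suc m) r) = r ! m" using m(2) by (simp add: take_Suc_conv_app_nth)
    ultimately have "gpath (V \<union> A) E v0 (r ! m) = take (Suc m) r"
      using gpath_eq[OF tree is_path_take[OF r(1) m(2)]] by simp
    moreover have "e \<notin> path_edges (take (Suc m) r)"
    proof
      assume "e \<in> path_edges (take (Suc m) r)"
      then have "e \<in> {e \<in> path_edges (take (Suc m) r). take (Suc m) r ! m \<in> e}"
        using e m(2) by simp
      then have "0 < m \<and> e = path_edge (take (Suc m) r) (m - 1)"
        using path_edges_at_nth[of "take (Suc m) r" m] dist m(2) by (auto split: if_splits)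
      then show False using not_back m(2) by (simp add: path_edge_take)
    qed
    ultimately show ?thesis
      using root False in_V[OF m] e unfolding is_root_def by simp
  qed
  have "sgn (det_path E q xs) = s"
  proof (rule sgn_det_path[OF xs _ fin len \<open>0 < n\<close>])
    show "distinct xs" unfolding xs_def using dist by simp
    show "q (path_edge xs j) (xs ! j) > 0" if "j < n" for j
    proof -
      have j: "Suc (k + j) < length r" using that by (simp add: n_def)
      have "path_edge r (k + j) \<noteq> path_edge r (k + j - 1)" if "0 < k + j"
        using path_edge_neq_next[OF r(1), of "k + j - 1"] j that by simp
      moreover have "path_edge r (k + j) \<in> E"
        using path_edges_subset[OF r(1)] path_edge_in_path_edges[OF j] by blast
      ultimately have "q (path_edge r (k + j)) (r ! (k + j)) \<ge> 1"
        using j by (intro root_pos) (auto simp: path_edge_def)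
      then show ?thesis by (simp add: xs_edge xs_nth)
    qed
  next
    fix i assume i: "0 < i" "i \<le> n"
    show "Qpath E q xs (xs ! i) > 0"
      unfolding Qpath_def
    proof (rule prod_pos)
      fix e assume e: "e \<in> {\<epsilon> \<in> E. xs ! i \<in> \<epsilon> \<and> \<epsilon> \<notin> path_edges xs}"
      have "path_edge r (k + i - 1) \<in> path_edges xs"
        using path_edge_in_path_edges[of "i - 1" xs] xs_edge[of "i - 1"] i len by simp
      then have "e \<noteq> path_edge r (k + i - 1)" using e by blast
      moreover have "k + i < length r" using i by (simp add: n_def)
      ultimately have "q e (r ! (k + i)) \<ge> 1"
        using e by (intro root_pos) (auto simp: xs_nth)
      then show "q e (xs ! i) > 0" by (simp add: xs_nth)
    qed
  next
    fix j assume "j < n"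
    then show "sgn (det_edge E q (xs ! j) (xs ! Suc j)) = s"
      using edge in_V[of "k + j"] in_V[of "k + Suc j"] path_edges_subset[OF xs]
        path_edge_in_path_edges[of j xs] len
      by (auto simp: xs_nth n_def path_edge_def)
  qed
  then show ?thesis using \<open>gpath (V \<union> A) E v w = xs\<close> by simp
qed

lemma sgn_det_gpath_comparable:
  assumes drt: "decorated_rooted_tree V A E f q v0" and "v \<in> V" "w \<in> V"
    and "tree_less V A E v0 v w \<or> tree_less V A E v0 w v"
    and edge: "\<And>x y. x \<in> V \<Longrightarrow> y \<in> V \<Longrightarrow> {x, y} \<in> E \<Longrightarrow> sgn (det_edge E q x y) = s"
  shows "sgn (det_path E q (gpath (V \<union> A) E v w)) = s"
proof (cases "tree_less V A E v0 v w")
  case True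
  then show ?thesis by (rule sgn_det_gpath_descending[OF drt \<open>v \<in> V\<close> \<open>w \<in> V\<close> _ edge])
next
  case False
  then have wv: "tree_less V A E v0 w v" using assms(4) by blast
  have tree: "is_tree (V \<union> A) E"
    using drt unfolding decorated_rooted_tree_def decorated_tree_def by simp
  define p where "p = gpath (V \<union> A) E w v"
  have p: "is_path (V \<union> A) E p" "hd p = w" "last p = v"
    using gpath_spec[OF tree] \<open>v \<in> V\<close> \<open>w \<in> V\<close> unfolding p_def by auto
  have "p \<noteq> []" using p(1) unfolding is_path_def by simp
  have "2 \<le> length p"
  proof (rule ccontr)
    assume "\<not> 2 \<le> length p"
    then obtain a where "p = [a]" using \<open>p \<noteq> []\<close> by (cases p) (auto simp: Suc_le_eq)
    then show False using p(2,3) wv unfolding tree_less_def by simp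
  qed
  have "gpath (V \<union> A) E v w = rev p"
    using gpath_eq[OF tree is_path_rev[OF p(1)]] p(2,3) \<open>p \<noteq> []\<close> by (simp add: hd_rev last_rev)
  then show ?thesis
    using det_path_rev[OF \<open>2 \<le> length p\<close>] sgn_det_gpath_descending[OF drt \<open>w \<in> V\<close> \<open>v \<in> V\<close> wv edge]
    unfolding p_def by simp
qed

theorem proposition5p7:
  fixes V A :: "'a set" and E :: "'a set set" and f :: "'a \<Rightarrow> int"
    and q :: "'a set \<Rightarrow> 'a \<Rightarrow> int" and v0 v w :: 'a
  assumes "decorated_rooted_tree V A E f q v0"
    and "v \<in> V" and "w \<in> V"
    and "tree_less V A E v0 v w \<or> tree_less V A E v0 w v"
  shows "(negative_determinants V E q \<longrightarrow> det_path E q (gpath (V \<union> A) E v w) < 0) \<and>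
         (positive_determinants V E q \<longrightarrow> det_path E q (gpath (V \<union> A) E v w) > 0)"
proof (intro conjI impI)
  assume "negative_determinants V E q"
  then have "sgn (det_path E q (gpath (V \<union> A) E v w)) = -1"
    by (intro sgn_det_gpath_comparable[OF assms]) (simp add: negative_determinants_def sgn_1_neg)
  then show "det_path E q (gpath (V \<union> A) E v w) < 0" by (simp add: sgn_1_neg)
next
  assume "positive_determinants V E q"
  then have "sgn (det_path E q (gpath (V \<union> A) E v w)) = 1"
    by (intro sgn_det_gpath_comparable[OF assms]) (simp add: positive_determinants_def sgn_1_pos)
  then show "det_path E q (gpath (V \<union> A) E v w) > 0" by (simp add: sgn_1_pos)
qed

end
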